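(* In the setting described in the context, let $i\in\mathcal V$ and let $z_{-i}=(z_j)_{j\ne i}\in[0,1]^{n-1}$ be such that $\mathcal S(z_{-i})=\{j\ne i: z_j=1\}\ne\emptyset$. Then: (i) the map $z_i\mapsto\upsilon_i(z_i,z_{-i})$ is constant on $[0,1)$; (ii) $\mathcal B_i(z_{-i})\in\{[0,1),\,[0,1],\,\{1\}\}$; (iii) if $\sigma_i^2\ge\sigma_j^2$ for every $j\in\mathcal S(z_{-i})$, then $\mathcal B_i(z_{-i})\in\{[0,1),[0,1]\}$; (iv) if $\sigma_i^2>\sigma_j^2$ for every $j\in\mathcal S(z_{-i})$, then $\mathcal B_i(z_{-i})=[0,1)$.
   Context: Let $n\ge2$ and $\mathcal V=\{1,\dots,n\}$. Let $P\in\mathbb{R}^{n\times n}$ be a row-stochastic, irreducible, aperiodic matrix (the graph on $\mathcal V$ with edge $(i,j)$ iff $P_{ij}>0$ is strongly connected with gcd of cycle lengths $1$). For $z\in[0,1]^n$, $W(z)=(I-[z])P+[z]$ ($[z]$ the diagonal matrix with diagonal $z$) and $H(z)=\lim_{t\to\infty}W(z)^t$ (the limit exists and is row-stochastic). Let $\sigma_1^2,\dots,\sigma_n^2>0$. Agent $i$'s cost is $\upsilon_i(z)=\sum_jH_{ij}(z)^2\sigma_j^2$, written $\upsilon_i(z_i,z_{-i})$, and her best response set is $\mathcal B_i(z_{-i})=\arg\min_{z_i\in[0,1]}\upsilon_i(z_i,z_{-i})$. *)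

theory Defs
  imports "HOL-Analysis.Analysis"
begin

text \<open>Vertices are 0,...,n-1 (the paper's 1,...,n shifted by one).
  n x n real matrices are represented as functions nat => nat => real,
  only entries with indices below n are meaningful.\<close>

definition mat_mult :: "nat \<Rightarrow> (nat \<Rightarrow> nat \<Rightarrow> real) \<Rightarrow> (nat \<Rightarrow> nat \<Rightarrow> real) \<Rightarrow> (nat \<Rightarrow> nat \<Rightarrow> real)" where
  "mat_mult n A B = (\<lambda>i j. \<Sum>k<n. A i k * B k j)"

definition id_mat :: "nat \<Rightarrow> nat \<Rightarrow> real" where
  "id_mat = (\<lambda>i j. if i = j then 1 else 0)"

primrec mat_pow :: "nat \<Rightarrow> (nat \<Rightarrow> nat \<Rightarrow> real) \<Rightarrow> nat \<Rightarrow> (nat \<Rightarrow> nat \<Rightarrow> real)" where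
  "mat_pow n A 0 = id_mat"
| "mat_pow n A (Suc t) = mat_mult n (mat_pow n A t) A"

definition row_stochastic :: "nat \<Rightarrow> (nat \<Rightarrow> nat \<Rightarrow> real) \<Rightarrow> bool" where
  "row_stochastic n P \<longleftrightarrow> (\<forall>i<n. \<forall>j<n. 0 \<le> P i j) \<and> (\<forall>i<n. (\<Sum>j<n. P i j) = 1)"

definition edges :: "nat \<Rightarrow> (nat \<Rightarrow> nat \<Rightarrow> real) \<Rightarrow> (nat \<times> nat) set" where
  "edges n P = {(i, j). i < n \<and> j < n \<and> 0 < P i j}"

definition strongly_connected :: "nat \<Rightarrow> (nat \<Rightarrow> nat \<Rightarrow> real) \<Rightarrow> bool" where
  "strongly_connected n P \<longleftrightarrow> (\<forall>i<n. \<forall>j<n. (i, j) \<in> (edges n P)\<^sup>*)"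

definition is_cycle :: "nat \<Rightarrow> (nat \<Rightarrow> nat \<Rightarrow> real) \<Rightarrow> nat list \<Rightarrow> bool" where
  "is_cycle n P vs \<longleftrightarrow> vs \<noteq> [] \<and> distinct vs \<and> set vs \<subseteq> {..<n} \<and>
     (\<forall>m<length vs. (vs ! m, vs ! ((m + 1) mod length vs)) \<in> edges n P)"

definition cycle_lengths :: "nat \<Rightarrow> (nat \<Rightarrow> nat \<Rightarrow> real) \<Rightarrow> nat set" where
  "cycle_lengths n P = {length vs | vs. is_cycle n P vs}"

definition irreducible_mat :: "nat \<Rightarrow> (nat \<Rightarrow> nat \<Rightarrow> real) \<Rightarrow> bool" where
  "irreducible_mat n P \<longleftrightarrow> strongly_connected n P"

definition aperiodic_mat :: "nat \<Rightarrow> (nat \<Rightarrow> nat \<Rightarrow> real) \<Rightarrow> bool" where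
  "aperiodic_mat n P \<longleftrightarrow> Gcd (cycle_lengths n P) = 1"

definition W :: "(nat \<Rightarrow> nat \<Rightarrow> real) \<Rightarrow> (nat \<Rightarrow> real) \<Rightarrow> (nat \<Rightarrow> nat \<Rightarrow> real)" where
  "W P z = (\<lambda>i j. (1 - z i) * P i j + (if i = j then z i else 0))"

definition H :: "nat \<Rightarrow> (nat \<Rightarrow> nat \<Rightarrow> real) \<Rightarrow> (nat \<Rightarrow> real) \<Rightarrow> (nat \<Rightarrow> nat \<Rightarrow> real)" where
  "H n P z = (\<lambda>i j. lim (\<lambda>t. mat_pow n (W P z) t i j))"

definition upsilon :: "nat \<Rightarrow> (nat \<Rightarrow> nat \<Rightarrow> real) \<Rightarrow> (nat \<Rightarrow> real) \<Rightarrow> nat \<Rightarrow> (nat \<Rightarrow> real) \<Rightarrow> real" where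
  "upsilon n P sigma2 i z = (\<Sum>j<n. (H n P z i j)\<^sup>2 * sigma2 j)"

text \<open>Best response of agent i to z_{-i}: the profile z with its i-th entry replaced
  (the value z i itself is irrelevant).\<close>
definition best_response :: "nat \<Rightarrow> (nat \<Rightarrow> nat \<Rightarrow> real) \<Rightarrow> (nat \<Rightarrow> real) \<Rightarrow> nat \<Rightarrow> (nat \<Rightarrow> real) \<Rightarrow> real set" where
  "best_response n P sigma2 i z =
     {x \<in> {0..1}. \<forall>y\<in>{0..1}. upsilon n P sigma2 i (z(i := x)) \<le> upsilon n P sigma2 i (z(i := y))}"

definition stubborn_set :: "nat \<Rightarrow> nat \<Rightarrow> (nat \<Rightarrow> real) \<Rightarrow> nat set" where
  "stubborn_set n i z = {j. j < n \<and> j \<noteq> i \<and> z j = 1}"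

end

theory Submission
  imports Defs
begin

(* Agents with z_j = 1 are absorbing states of the random walk with transition matrix W(z). Strong
   connectivity lets every agent reach one of them, so the mass that W(z)^t puts on the remaining agents
   decays geometrically: W(z)^t converges, and the limit H(z) vanishes on the
   columns of non-stubborn agents and is the identity on the rows of stubborn ones. Together with
   harmonicity H = W(z) H these properties determine H(z), and at a row k with z_k < 1 harmonicity reads
   H_k = (P H)_k, whatever the value of z_k. Hence H(z), and with it the cost of agent i, depends on z only
   through the set of fully stubborn agents: it is a constant c for every z_i < 1, and sigma_i^2 for
   z_i = 1. Row i of H(z) for z_i = 0 is a probability vector h supported on S(z_{-i}), so
   c = sum_j h_j^2 sigma_j^2 <= sum_j h_j sigma_j^2, which gives (iii) and (iv). *)

lemma decseq_contraction_tendsto_zero: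
  fixes f :: "nat \<Rightarrow> real"
  assumes dec: "decseq f" and nonneg: "\<And>t. 0 \<le> f t"
    and contract: "\<And>t. f (t + N) \<le> c * f t" and "0 \<le> c" "c < 1"
  shows "f \<longlonglongrightarrow> 0"
proof -
  have lim: "f \<longlonglongrightarrow> (INF t. f t)"
    using nonneg by (intro LIMSEQ_decseq_INF dec bdd_belowI[of _ 0]) auto
  have geometric: "f (q * N) \<le> c ^ q * f 0" for q
  proof (induction q)
    case (Suc q)
    have "f (Suc q * N) \<le> c * f (q * N)"
      using contract[of "q * N"] by (simp add: add.commute)
    also have "\<dots> \<le> c * (c ^ q * f 0)"
      using Suc \<open>0 \<le> c\<close> by (rule mult_left_mono)
    finally show ?case by simp
  qed simp
  have "(\<lambda>q. c ^ q * f 0) \<longlonglongrightarrow> 0"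
    using assms by (intro tendsto_mult_left_zero LIMSEQ_power_zero) simp
  moreover have "(INF t. f t) \<le> c ^ q * f 0" for q
    using decseq_ge[OF dec lim, of "q * N"] geometric[of q] by linarith
  ultimately have "(INF t. f t) \<le> 0"
    by (intro LIMSEQ_le_const[of _ 0]) auto
  moreover have "0 \<le> (INF t. f t)"
    using nonneg by (intro cINF_greatest) auto
  ultimately have "(INF t. f t) = 0"
    by linarith
  with lim show ?thesis
    by simp
qed

lemma sum_sq_weighted_le_sum_weighted:
  fixes h s :: "'a \<Rightarrow> real"
  assumes "finite A" "\<forall>j\<in>A. 0 \<le> h j" "sum h A = 1" "\<forall>j\<in>A. 0 \<le> s j"
  shows "(\<Sum>j\<in>A. (h j)\<^sup>2 * s j) \<le> (\<Sum>j\<in>A. h j * s j)"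
proof (rule sum_mono)
  fix j assume j: "j \<in> A"
  have "h j \<le> 1"
    using j assms(1-3) member_le_sum[of j A h] by simp
  then show "(h j)\<^sup>2 * s j \<le> h j * s j"
    using j assms(2,4) by (simp add: power2_eq_square mult_left_le mult_right_mono)
qed

lemma sum_sq_weighted_le:
  fixes h s :: "'a \<Rightarrow> real"
  assumes "finite A" "\<forall>j\<in>A. 0 \<le> h j" "sum h A = 1" "\<forall>j\<in>A. 0 \<le> s j"
    and bound: "\<forall>j\<in>A. h j \<noteq> 0 \<longrightarrow> s j \<le> b"
  shows "(\<Sum>j\<in>A. (h j)\<^sup>2 * s j) \<le> b"
proof -
  have "(\<Sum>j\<in>A. (h j)\<^sup>2 * s j) \<le> (\<Sum>j\<in>A. h j * s j)"
    using assms(1-4) by (rule sum_sq_weighted_le_sum_weighted)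
  also have "\<dots> \<le> (\<Sum>j\<in>A. h j * b)"
    using assms(2) bound by (intro sum_mono) (metis mult_left_mono mult_zero_left order_refl)
  also have "\<dots> = b"
    using assms(3) by (simp add: sum_distrib_right[symmetric])
  finally show ?thesis .
qed

lemma sum_sq_weighted_less:
  fixes h s :: "'a \<Rightarrow> real"
  assumes "finite A" "\<forall>j\<in>A. 0 \<le> h j" "sum h A = 1" "\<forall>j\<in>A. 0 \<le> s j"
    and bound: "\<forall>j\<in>A. h j \<noteq> 0 \<longrightarrow> s j < b"
  shows "(\<Sum>j\<in>A. (h j)\<^sup>2 * s j) < b"
proof -
  obtain j0 where j0: "j0 \<in> A" "h j0 \<noteq> 0"
    using assms(3) by (metis one_neq_zero sum.neutral)
  have "(\<Sum>j\<in>A. (h j)\<^sup>2 * s j) \<le> (\<Sum>j\<in>A. h j * s j)"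
    using assms(1-4) by (rule sum_sq_weighted_le_sum_weighted)
  also have "\<dots> < (\<Sum>j\<in>A. h j * b)"
  proof (rule sum_strict_mono_ex1)
    show "\<forall>j\<in>A. h j * s j \<le> h j * b"
      using assms(2) bound by (metis less_imp_le mult_left_mono mult_zero_left order_refl)
    show "\<exists>j\<in>A. h j * s j < h j * b"
      using j0 assms(2) bound by (intro bexI[of _ j0]) auto
  qed fact
  also have "\<dots> = b"
    using assms(3) by (simp add: sum_distrib_right[symmetric])
  finally show ?thesis .
qed

lemma minimizers_on_unit_interval:
  fixes g :: "real \<Rightarrow> real"
  assumes const: "\<forall>x\<in>{0..<1}. g x = c"
  shows "{x\<in>{0..1}. \<forall>y\<in>{0..1}. g x \<le> g y} =
    (if c < g 1 then {0..<1} else if c = g 1 then {0..1} else {1})"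
proof -
  define M where "M = {x\<in>{0..1}. \<forall>y\<in>{0..1}. g x \<le> g y}"
  have g_values: "g y = c \<or> y = 1" if "y \<in> {0..1}" for y
    using const that by force
  have mem: "x \<in> M \<longleftrightarrow> (0 \<le> x \<and> x < 1 \<and> c \<le> g 1) \<or> (x = 1 \<and> g 1 \<le> c)" for x
  proof
    assume "x \<in> M"
    then have "0 \<le> x" "x \<le> 1" "g x \<le> g 0" "g x \<le> g 1"
      by (auto simp: M_def)
    then show "(0 \<le> x \<and> x < 1 \<and> c \<le> g 1) \<or> (x = 1 \<and> g 1 \<le> c)"
      using const by (cases "x = 1") auto
  next
    assume x: "(0 \<le> x \<and> x < 1 \<and> c \<le> g 1) \<or> (x = 1 \<and> g 1 \<le> c)"
    have "g x \<le> g y" if "y \<in> {0..1}" for y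
      using g_values[OF that] x const by auto
    then show "x \<in> M"
      using x by (auto simp: M_def)
  qed
  show ?thesis
    unfolding M_def[symmetric] by (auto simp: mem)
qed

lemma mat_pow_add:
  assumes "j < n"
  shows "mat_pow n A (s + r) i j = (\<Sum>l<n. mat_pow n A s i l * mat_pow n A r l j)"
  using assms
proof (induction r arbitrary: j)
  case 0
  then show ?case by (simp add: id_mat_def of_bool_def[symmetric])
next
  case (Suc r)
  have "mat_pow n A (s + Suc r) i j = (\<Sum>k<n. (\<Sum>l<n. mat_pow n A s i l * mat_pow n A r l k) * A k j)"
    using Suc by (simp add: mat_mult_def)
  also have "\<dots> = (\<Sum>l<n. mat_pow n A s i l * mat_pow n A (Suc r) l j)"
    by (simp add: mat_mult_def sum_distrib_left sum_distrib_right mult.assoc) (rule sum.swap)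
  finally show ?case .
qed

lemma mat_mult_id_left: "i < n \<Longrightarrow> mat_mult n id_mat A i j = A i j"
  by (simp add: mat_mult_def id_mat_def of_bool_def[symmetric])

lemma mat_pow_Suc_left:
  assumes "i < n" "j < n"
  shows "mat_pow n A (Suc t) i j = (\<Sum>l<n. A i l * mat_pow n A t l j)"
  using mat_pow_add[of j n A 1 t i] assms by (simp add: mat_mult_id_left)

lemma row_stochastic_mat_pow:
  assumes "row_stochastic n A"
  shows "row_stochastic n (mat_pow n A t)"
proof (induction t)
  case 0
  show ?case by (simp add: row_stochastic_def id_mat_def of_bool_def[symmetric])
next
  case (Suc t)
  have "0 \<le> mat_pow n A (Suc t) i j" if "i < n" "j < n" for i j
    using Suc assms that by (auto simp: mat_mult_def row_stochastic_def intro!: sum_nonneg)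
  moreover have "(\<Sum>j<n. mat_pow n A (Suc t) i j) = 1" if "i < n" for i
  proof -
    have "(\<Sum>j<n. mat_pow n A (Suc t) i j) = (\<Sum>k<n. mat_pow n A t i k * (\<Sum>j<n. A k j))"
      by (simp add: mat_mult_def sum_distrib_left) (rule sum.swap)
    also have "\<dots> = 1"
      using Suc assms that by (simp add: row_stochastic_def)
    finally show ?thesis .
  qed
  ultimately show ?case by (simp add: row_stochastic_def)
qed

lemma row_stochastic_le_one:
  assumes "row_stochastic n A" "i < n" "j < n"
  shows "A i j \<le> 1"
proof -
  have "A i j \<le> (\<Sum>l<n. A i l)"
    using assms by (intro member_le_sum) (auto simp: row_stochastic_def)
  then show ?thesis using assms by (simp add: row_stochastic_def)
qed

lemma W_row_sum:
  assumes "k < n"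
  shows "(\<Sum>l<n. W P z k l * g l) = (1 - z k) * (\<Sum>l<n. P k l * g l) + z k * g k"
proof -
  have "W P z k l * g l = (1 - z k) * (P k l * g l) + (if k = l then z k * g k else 0)" for l
    by (simp add: W_def algebra_simps)
  then show ?thesis
    using assms by (simp add: sum.distrib sum_distrib_left)
qed

lemma row_stochastic_W:
  assumes "row_stochastic n P" "\<forall>j<n. z j \<in> {0..1}"
  shows "row_stochastic n (W P z)"
  using assms W_row_sum[of _ n P z "\<lambda>_. 1"]
  by (auto simp: row_stochastic_def W_def)

lemma W_stubborn_row: "z a = 1 \<Longrightarrow> W P z a j = (if a = j then 1 else 0)"
  by (auto simp: W_def)

lemma mat_pow_W_stubborn_row:
  assumes "z a = 1" "a < n"
  shows "mat_pow n (W P z) t a j = (if a = j then 1 else 0)"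
proof (induction t arbitrary: j)
  case 0
  then show ?case by (simp add: id_mat_def)
next
  case (Suc t)
  then show ?case
    using assms by (simp add: mat_mult_def W_stubborn_row of_bool_def[symmetric])
qed

lemma H_stubborn_row:
  assumes "z a = 1" "a < n"
  shows "H n P z a j = (if a = j then 1 else 0)"
  using assms by (simp add: H_def mat_pow_W_stubborn_row)

locale stubborn_chain =
  fixes n :: nat and P :: "nat \<Rightarrow> nat \<Rightarrow> real" and z :: "nat \<Rightarrow> real"
  assumes stochastic: "row_stochastic n P"
    and connected: "strongly_connected n P"
    and stubbornness_range: "\<forall>j<n. z j \<in> {0..1}"
    and stubborn_exists: "\<exists>a<n. z a = 1"
begin

abbreviation Wpow :: "nat \<Rightarrow> nat \<Rightarrow> nat \<Rightarrow> real" where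
  "Wpow t \<equiv> mat_pow n (W P z) t"

lemma W_nonneg: "k < n \<Longrightarrow> j < n \<Longrightarrow> 0 \<le> W P z k j"
  using row_stochastic_W[OF stochastic stubbornness_range] by (simp add: row_stochastic_def)

lemma Wpow_stochastic: "row_stochastic n (Wpow t)"
  using row_stochastic_mat_pow row_stochastic_W stochastic stubbornness_range by blast

lemma Wpow_nonneg: "k < n \<Longrightarrow> j < n \<Longrightarrow> 0 \<le> Wpow t k j"
  using Wpow_stochastic by (simp add: row_stochastic_def)

lemma W_pos:
  assumes "k < n" "j < n" "0 < P k j" "z k \<noteq> 1"
  shows "0 < W P z k j"
proof -
  have "z k < 1" "0 \<le> z k"
    using assms stubbornness_range by force+
  then have "0 < (1 - z k) * P k j" "0 \<le> (if k = j then z k else 0)"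
    using assms by auto
  then show ?thesis
    by (simp add: W_def)
qed

lemma incseq_Wpow_stubborn_column:
  assumes "a < n" "z a = 1" "k < n"
  shows "incseq (\<lambda>t. Wpow t k a)"
proof (rule incseq_SucI)
  fix t
  have "Wpow t k a * W P z a a \<le> (\<Sum>l<n. Wpow t k l * W P z l a)"
    using assms by (intro member_le_sum) (auto simp: Wpow_nonneg W_nonneg)
  then show "Wpow t k a \<le> Wpow (Suc t) k a"
    using assms by (simp add: mat_mult_def W_stubborn_row)
qed

lemma reaches_stubborn: "\<exists>a t. a < n \<and> z a = 1 \<and> 0 < Wpow t k a"
  if "k < n"
proof -
  obtain a0 where a0: "a0 < n" "z a0 = 1"
    using stubborn_exists by blast
  have "(k, a0) \<in> (edges n P)\<^sup>*"
    using connected a0 that by (simp add: strongly_connected_def)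
  then show ?thesis
  proof (induction rule: converse_rtrancl_induct)
    case base
    show ?case using a0 by (intro exI[of _ a0] exI[of _ 0]) (simp add: id_mat_def)
  next
    case (step k w)
    then have edge: "k < n" "w < n" "0 < P k w"
      by (auto simp: edges_def)
    show ?case
    proof (cases "z k = 1")
      case True
      then show ?thesis using edge by (intro exI[of _ k] exI[of _ 0]) (simp add: id_mat_def)
    next
      case False
      obtain a t where a: "a < n" "z a = 1" "0 < Wpow t w a"
        using step.IH by blast
      have "0 < W P z k w * Wpow t w a"
        using W_pos[OF edge False] a by simp
      also have "\<dots> \<le> (\<Sum>l<n. W P z k l * Wpow t l a)"
        using edge a by (intro member_le_sum) (auto simp: W_nonneg Wpow_nonneg)
      also have "\<dots> = Wpow (Suc t) k a"
        using mat_pow_Suc_left edge a by simp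
      finally show ?thesis using a by blast
    qed
  qed
qed

definition transient_mass :: "nat \<Rightarrow> nat \<Rightarrow> real" where
  "transient_mass t k = (\<Sum>j<n. if z j = 1 then 0 else Wpow t k j)"

lemma transient_mass_nonneg: "k < n \<Longrightarrow> 0 \<le> transient_mass t k"
  unfolding transient_mass_def by (intro sum_nonneg) (simp add: Wpow_nonneg)

lemma transient_mass_eq:
  assumes "k < n"
  shows "transient_mass t k = 1 - (\<Sum>j<n. if z j = 1 then Wpow t k j else 0)"
proof -
  have "(\<Sum>j<n. Wpow t k j) = 1"
    using Wpow_stochastic assms by (simp add: row_stochastic_def)
  moreover have "(\<Sum>j<n. Wpow t k j) =
      (\<Sum>j<n. (if z j = 1 then 0 else Wpow t k j) + (if z j = 1 then Wpow t k j else 0))"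
    by (intro sum.cong) auto
  ultimately show ?thesis
    by (simp add: transient_mass_def sum.distrib)
qed

lemma transient_mass_le_one:
  assumes "k < n"
  shows "transient_mass t k \<le> 1"
proof -
  have "0 \<le> (\<Sum>j<n. if z j = 1 then Wpow t k j else 0)"
    using assms by (intro sum_nonneg) (simp add: Wpow_nonneg)
  then show ?thesis
    using assms by (simp add: transient_mass_eq)
qed

lemma transient_mass_stubborn: "l < n \<Longrightarrow> z l = 1 \<Longrightarrow> transient_mass t l = 0"
  unfolding transient_mass_def by (intro sum.neutral) (simp add: mat_pow_W_stubborn_row)

lemma transient_mass_add:
  "transient_mass (s + r) k = (\<Sum>l<n. Wpow s k l * transient_mass r l)"
proof -
  have "transient_mass (s + r) k =
      (\<Sum>j<n. \<Sum>l<n. Wpow s k l * (if z j = 1 then 0 else Wpow r l j))"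
    unfolding transient_mass_def by (intro sum.cong refl) (simp add: mat_pow_add)
  also have "\<dots> = (\<Sum>l<n. Wpow s k l * transient_mass r l)"
    unfolding transient_mass_def by (simp add: sum_distrib_left) (rule sum.swap)
  finally show ?thesis .
qed

lemma transient_mass_contract:
  assumes "k < n" and bound: "\<forall>l<n. transient_mass r l \<le> c"
  shows "transient_mass (s + r) k \<le> c * transient_mass s k"
proof -
  have "transient_mass (s + r) k = (\<Sum>l<n. Wpow s k l * transient_mass r l)"
    by (rule transient_mass_add)
  also have "\<dots> \<le> (\<Sum>l<n. c * (if z l = 1 then 0 else Wpow s k l))"
  proof (rule sum_mono)
    fix l assume "l \<in> {..<n}"
    then show "Wpow s k l * transient_mass r l \<le> c * (if z l = 1 then 0 else Wpow s k l)"
      using assms Wpow_nonneg[of k l s]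
      by (simp add: transient_mass_stubborn mult.commute mult_right_mono)
  qed
  also have "\<dots> = c * transient_mass s k"
    by (simp add: transient_mass_def sum_distrib_left)
  finally show ?thesis .
qed

lemma transient_mass_uniformly_lt_one: "\<exists>N. \<forall>l<n. transient_mass N l < 1"
proof -
  obtain a t where reach: "\<forall>l<n. a l < n \<and> z (a l) = 1 \<and> 0 < Wpow (t l) l (a l)"
    using reaches_stubborn by metis
  define N where "N = Max (t ` {..<n})"
  have "transient_mass N l < 1" if "l < n" for l
  proof -
    have "0 < Wpow (t l) l (a l)"
      using reach that by blast
    also have "\<dots> \<le> Wpow N l (a l)"
    proof (rule incseqD)
      show "incseq (\<lambda>t. Wpow t l (a l))"
        using reach that by (simp add: incseq_Wpow_stubborn_column)
      show "t l \<le> N"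
        unfolding N_def using that by (intro Max_ge) auto
    qed
    also have "\<dots> = (if z (a l) = 1 then Wpow N l (a l) else 0)"
      using reach that by simp
    also have "\<dots> \<le> (\<Sum>j<n. if z j = 1 then Wpow N l j else 0)"
      by (rule member_le_sum) (use reach that in \<open>auto simp: Wpow_nonneg\<close>)
    finally show ?thesis
      using that by (simp add: transient_mass_eq)
  qed
  then show ?thesis by blast
qed

lemma transient_mass_tendsto_zero:
  assumes "k < n"
  shows "(\<lambda>t. transient_mass t k) \<longlonglongrightarrow> 0"
proof -
  obtain N where N: "\<forall>l<n. transient_mass N l < 1"
    using transient_mass_uniformly_lt_one by blast
  define c where "c = Max (transient_mass N ` {..<n})"
  have bound: "\<forall>l<n. transient_mass N l \<le> c"
    by (simp add: c_def)
  have "c \<in> transient_mass N ` {..<n}"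
    unfolding c_def using assms by (intro Max_in) auto
  then have "0 \<le> c" "c < 1"
    using N transient_mass_nonneg by auto
  moreover have "decseq (\<lambda>t. transient_mass t k)"
    using transient_mass_contract[OF assms] transient_mass_le_one
    by (intro decseq_SucI) (metis mult_1 plus_1_eq_Suc add.commute)
  ultimately show ?thesis
    using transient_mass_contract[OF assms bound] transient_mass_nonneg[OF assms]
    by (intro decseq_contraction_tendsto_zero[where N = N and c = c]) auto
qed

lemma Wpow_transient_column_tendsto_zero:
  assumes "k < n" "j < n" "z j \<noteq> 1"
  shows "(\<lambda>t. Wpow t k j) \<longlonglongrightarrow> 0"
proof (rule tendsto_sandwich[OF _ _ tendsto_const transient_mass_tendsto_zero[OF assms(1)]])
  show "\<forall>\<^sub>F t in sequentially. 0 \<le> Wpow t k j"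
    using assms by (simp add: Wpow_nonneg)
  have "Wpow t k j \<le> transient_mass t k" for t
  proof -
    have "Wpow t k j = (if z j = 1 then 0 else Wpow t k j)"
      using assms by simp
    also have "\<dots> \<le> transient_mass t k"
      unfolding transient_mass_def
      by (rule member_le_sum) (use assms in \<open>auto simp: Wpow_nonneg\<close>)
    finally show ?thesis .
  qed
  then show "\<forall>\<^sub>F t in sequentially. Wpow t k j \<le> transient_mass t k"
    by simp
qed

lemma Wpow_tendsto_H:
  assumes "k < n" "j < n"
  shows "(\<lambda>t. Wpow t k j) \<longlonglongrightarrow> H n P z k j"
proof -
  have "convergent (\<lambda>t. Wpow t k j)"
  proof (cases "z j = 1")
    case True
    have "bdd_above (range (\<lambda>t. Wpow t k j))"
      using assms Wpow_stochastic row_stochastic_le_one by (intro bdd_aboveI[of _ 1]) blast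
    then show ?thesis
      using LIMSEQ_incseq_SUP incseq_Wpow_stubborn_column True assms
      unfolding convergent_def by blast
  next
    case False
    then show ?thesis
      using Wpow_transient_column_tendsto_zero assms unfolding convergent_def by blast
  qed
  then show ?thesis
    by (simp add: H_def convergent_LIMSEQ_iff)
qed

lemma H_transient_column: "k < n \<Longrightarrow> j < n \<Longrightarrow> z j \<noteq> 1 \<Longrightarrow> H n P z k j = 0"
  using LIMSEQ_unique Wpow_tendsto_H Wpow_transient_column_tendsto_zero by blast

lemma H_nonneg: "k < n \<Longrightarrow> j < n \<Longrightarrow> 0 \<le> H n P z k j"
  by (rule LIMSEQ_le_const[OF Wpow_tendsto_H]) (auto simp: Wpow_nonneg)

lemma H_row_sum:
  assumes "k < n"
  shows "(\<Sum>j<n. H n P z k j) = 1"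
proof -
  have "(\<lambda>t. \<Sum>j<n. Wpow t k j) \<longlonglongrightarrow> (\<Sum>j<n. H n P z k j)"
    using assms by (intro tendsto_sum) (simp add: Wpow_tendsto_H)
  moreover have "(\<lambda>t. \<Sum>j<n. Wpow t k j) = (\<lambda>t. 1)"
    using Wpow_stochastic assms by (simp add: row_stochastic_def)
  ultimately show ?thesis
    by (simp add: LIMSEQ_const_iff)
qed

lemma H_harmonic:
  assumes "k < n" "j < n"
  shows "H n P z k j = (\<Sum>l<n. W P z k l * H n P z l j)"
proof -
  have "(\<lambda>t. Wpow (Suc t) k j) \<longlonglongrightarrow> H n P z k j"
    using Wpow_tendsto_H[OF assms] by (rule LIMSEQ_Suc)
  moreover have "(\<lambda>t. Wpow (Suc t) k j) \<longlonglongrightarrow> (\<Sum>l<n. W P z k l * H n P z l j)"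
    unfolding mat_pow_Suc_left[OF assms]
    using assms by (intro tendsto_sum tendsto_mult_left Wpow_tendsto_H) auto
  ultimately show ?thesis
    by (rule LIMSEQ_unique)
qed

lemma harmonic_eq_H:
  assumes harmonic: "\<forall>k<n. g k = (\<Sum>l<n. W P z k l * g l)"
    and boundary: "\<forall>a<n. z a = 1 \<longrightarrow> g a = (if a = j then 1 else 0)"
    and "k < n" "j < n"
  shows "g k = H n P z k j"
proof -
  have invariant: "(\<Sum>l<n. Wpow t k l * g l) = g k" if "k < n" for t k
    using that
  proof (induction t arbitrary: k)
    case 0
    then show ?case by (simp add: id_mat_def of_bool_def[symmetric])
  next
    case (Suc t)
    have "(\<Sum>l<n. Wpow (Suc t) k l * g l) = (\<Sum>m<n. Wpow t k m * (\<Sum>l<n. W P z m l * g l))"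
      by (simp add: mat_mult_def sum_distrib_left sum_distrib_right mult.assoc) (rule sum.swap)
    also have "\<dots> = (\<Sum>m<n. Wpow t k m * g m)"
      by (intro sum.cong refl) (simp add: harmonic[rule_format, symmetric])
    also have "\<dots> = g k"
      using Suc by blast
    finally show ?case .
  qed
  have "(\<lambda>t. \<Sum>l<n. Wpow t k l * g l) \<longlonglongrightarrow> (\<Sum>l<n. H n P z k l * g l)"
    using \<open>k < n\<close> by (intro tendsto_sum tendsto_mult_right Wpow_tendsto_H) auto
  then have "g k = (\<Sum>l<n. H n P z k l * g l)"
    using invariant[OF \<open>k < n\<close>] by (simp add: LIMSEQ_const_iff)
  also have "\<dots> = (\<Sum>l<n. H n P z k l * (if l = j then 1 else 0))"
    using boundary H_transient_column \<open>k < n\<close> by (intro sum.cong) auto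
  also have "\<dots> = H n P z k j"
    using \<open>j < n\<close> by (simp add: of_bool_def[symmetric])
  finally show ?thesis .
qed

lemma upsilon_le:
  assumes "k < n" "\<forall>j<n. 0 \<le> sigma2 j" "\<forall>j<n. z j = 1 \<longrightarrow> sigma2 j \<le> b"
  shows "upsilon n P sigma2 k z \<le> b"
  unfolding upsilon_def
  by (rule sum_sq_weighted_le) (use assms H_nonneg H_row_sum H_transient_column in auto)

lemma upsilon_less:
  assumes "k < n" "\<forall>j<n. 0 \<le> sigma2 j" "\<forall>j<n. z j = 1 \<longrightarrow> sigma2 j < b"
  shows "upsilon n P sigma2 k z < b"
  unfolding upsilon_def
  by (rule sum_sq_weighted_less) (use assms H_nonneg H_row_sum H_transient_column in auto)

end

lemma H_eq_if_same_stubborn_agents: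
  assumes "stubborn_chain n P z" "stubborn_chain n P z'"
    and same: "\<forall>k<n. z k = 1 \<longleftrightarrow> z' k = 1"
    and "k < n" "j < n"
  shows "H n P z k j = H n P z' k j"
proof -
  interpret z: stubborn_chain n P z by fact
  interpret z': stubborn_chain n P z' by fact
  have harmonic: "\<forall>k<n. H n P z k j = (\<Sum>l<n. W P z' k l * H n P z l j)"
  proof (intro allI impI)
    fix k assume k: "k < n"
    let ?S = "\<Sum>l<n. P k l * H n P z l j"
    show "H n P z k j = (\<Sum>l<n. W P z' k l * H n P z l j)"
    proof (cases "z' k = 1")
      case True
      then show ?thesis
        using k by (simp add: W_stubborn_row of_bool_def[symmetric])
    next
      case False
      have "H n P z k j = (\<Sum>l<n. W P z k l * H n P z l j)"
        using k \<open>j < n\<close> by (rule z.H_harmonic)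
      also have "\<dots> = (1 - z k) * ?S + z k * H n P z k j"
        using k by (rule W_row_sum)
      finally have "(1 - z k) * H n P z k j = (1 - z k) * ?S"
        by (simp add: left_diff_distrib)
      moreover have "z k \<noteq> 1"
        using False same k by blast
      ultimately have harmonic_P: "H n P z k j = ?S"
        by simp
      have "(\<Sum>l<n. W P z' k l * H n P z l j) = (1 - z' k) * ?S + z' k * H n P z k j"
        using k by (rule W_row_sum)
      also have "\<dots> = H n P z k j"
        unfolding harmonic_P[symmetric] by (simp add: algebra_simps)
      finally show ?thesis ..
    qed
  qed
  have boundary: "\<forall>a<n. z' a = 1 \<longrightarrow> H n P z a j = (if a = j then 1 else 0)"
    using same by (simp add: H_stubborn_row)
  show ?thesis
    using z'.harmonic_eq_H[of "\<lambda>k. H n P z k j", OF harmonic boundary \<open>k < n\<close> \<open>j < n\<close>] .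
qed

lemma upsilon_eq_if_same_stubborn_agents:
  assumes "stubborn_chain n P z" "stubborn_chain n P z'"
    and "\<forall>k<n. z k = 1 \<longleftrightarrow> z' k = 1" "k < n"
  shows "upsilon n P s k z = upsilon n P s k z'"
  unfolding upsilon_def
  by (intro sum.cong refl) (simp add: H_eq_if_same_stubborn_agents[OF assms])

lemma upsilon_stubborn_agent:
  assumes "z k = 1" "k < n"
  shows "upsilon n P s k z = s k"
proof -
  have "upsilon n P s k z = (\<Sum>j<n. if k = j then s j else 0)"
    unfolding upsilon_def using assms by (intro sum.cong) (auto simp: H_stubborn_row)
  then show ?thesis
    using assms(2) by simp
qed

lemma stubborn_chain_fun_upd:
  assumes "row_stochastic n P" "strongly_connected n P"
    and "\<forall>j<n. j \<noteq> i \<longrightarrow> z j \<in> {0..1}" "stubborn_set n i z \<noteq> {}" "x \<in> {0..1}"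
  shows "stubborn_chain n P (z(i := x))"
  using assms by unfold_locales (auto simp: stubborn_set_def)

theorem proposition4:
  fixes n :: nat and P :: "nat \<Rightarrow> nat \<Rightarrow> real" and sigma2 :: "nat \<Rightarrow> real"
    and z :: "nat \<Rightarrow> real" and i :: nat
  assumes n2: "2 \<le> n"
    and stoch: "row_stochastic n P"
    and irred: "irreducible_mat n P"
    and aper: "aperiodic_mat n P"
    and sigma_pos: "\<forall>j<n. 0 < sigma2 j"
    and i_in: "i < n"
    and z_range: "\<forall>j<n. j \<noteq> i \<longrightarrow> z j \<in> {0..1}"
    and S_ne: "stubborn_set n i z \<noteq> {}"
  shows "(\<forall>x\<in>{0..<1}. \<forall>y\<in>{0..<1}.
            upsilon n P sigma2 i (z(i := x)) = upsilon n P sigma2 i (z(i := y)))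
       \<and> best_response n P sigma2 i z \<in> {{0..<1}, {0..1}, {1}}
       \<and> ((\<forall>j\<in>stubborn_set n i z. sigma2 j \<le> sigma2 i) \<longrightarrow>
            best_response n P sigma2 i z \<in> {{0..<1}, {0..1}})
       \<and> ((\<forall>j\<in>stubborn_set n i z. sigma2 j < sigma2 i) \<longrightarrow>
            best_response n P sigma2 i z = {0..<1})"
proof -
  let ?v = "\<lambda>x. upsilon n P sigma2 i (z(i := x))"
  define c where "c = ?v 0"
  have chain: "stubborn_chain n P (z(i := x))" if "x \<in> {0..1}" for x
    using stoch irred z_range S_ne that unfolding irreducible_mat_def by (rule stubborn_chain_fun_upd)
  have const: "\<forall>x\<in>{0..<1}. ?v x = c"
    unfolding c_def using i_in by (auto intro!: upsilon_eq_if_same_stubborn_agents chain)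
  have "?v 1 = sigma2 i"
    using i_in by (simp add: upsilon_stubborn_agent)
  then have best_response:
    "best_response n P sigma2 i z =
      (if c < sigma2 i then {0..<1} else if c = sigma2 i then {0..1} else {1})"
    using minimizers_on_unit_interval[OF const] by (simp only: best_response_def)
  interpret z0: stubborn_chain n P "z(i := 0)"
    using chain by simp
  have sigma_nonneg: "\<forall>j<n. 0 \<le> sigma2 j"
    using sigma_pos by (simp add: less_imp_le)
  have "c \<le> sigma2 i" if "\<forall>j\<in>stubborn_set n i z. sigma2 j \<le> sigma2 i"
    unfolding c_def
    by (rule z0.upsilon_le[OF i_in sigma_nonneg]) (use that in \<open>simp add: stubborn_set_def\<close>)
  moreover have "c < sigma2 i" if "\<forall>j\<in>stubborn_set n i z. sigma2 j < sigma2 i"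
    unfolding c_def
    by (rule z0.upsilon_less[OF i_in sigma_nonneg]) (use that in \<open>simp add: stubborn_set_def\<close>)
  ultimately show ?thesis
    using const unfolding best_response by auto
qed

end
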